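(* For every finite additive poset $A$, $h(A)\le\dim(A)\le wt(A)\le w(A)$.
   Context: An additive poset is a pair $(A,\le)$ where $A$ is an abelian group and $\le$ is a partial order on $A$ such that for all $a,b,c\in A$: $(\ast)$ if $b\le a$ and $c\le a$ then $b+c\le a$; $(\ast\ast)$ if $a\le b$ and $a\le c$ then $a\le a+b+c$. Such $A$ is a $\mathbb{Z}/2\mathbb{Z}$-vector space; $\dim(A)$ is its dimension. The height $h(A)$ is the maximal length $n$ of a chain $a_0<a_1<\cdots<a_n$ in $A$; the width $w(A)$ is the maximal cardinality of an antichain (set of pairwise incomparable elements); the weight $wt(A)$ is the number of atoms, where an atom is a nonzero $a$ with $\{x:x\le a\}=\{0,a\}$. *)

theory Defs
  imports Main
begin

definition additive_poset :: "('a::ab_group_add \<Rightarrow> 'a \<Rightarrow> bool) \<Rightarrow> bool" where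
  "additive_poset le \<longleftrightarrow>
     (\<forall>a. le a a) \<and>
     (\<forall>a b. le a b \<and> le b a \<longrightarrow> a = b) \<and>
     (\<forall>a b c. le a b \<and> le b c \<longrightarrow> le a c) \<and>
     (\<forall>a b c. le b a \<and> le c a \<longrightarrow> le (b + c) a) \<and>
     (\<forall>a b c. le a b \<and> le a c \<longrightarrow> le a (a + b + c))"

definition strict :: "('a \<Rightarrow> 'a \<Rightarrow> bool) \<Rightarrow> 'a \<Rightarrow> 'a \<Rightarrow> bool" where
  "strict le a b \<longleftrightarrow> le a b \<and> a \<noteq> b"

definition height :: "('a \<Rightarrow> 'a \<Rightarrow> bool) \<Rightarrow> nat" where
  "height le = Max {n. \<exists>f::nat \<Rightarrow> 'a. \<forall>i<n. strict le (f i) (f (Suc i))}"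

definition antichain_in :: "('a \<Rightarrow> 'a \<Rightarrow> bool) \<Rightarrow> 'a set \<Rightarrow> bool" where
  "antichain_in le S \<longleftrightarrow> (\<forall>x\<in>S. \<forall>y\<in>S. x \<noteq> y \<longrightarrow> \<not> le x y \<and> \<not> le y x)"

definition width :: "('a \<Rightarrow> 'a \<Rightarrow> bool) \<Rightarrow> nat" where
  "width le = Max (card ` {S. antichain_in le S})"

definition atom :: "('a::zero \<Rightarrow> 'a \<Rightarrow> bool) \<Rightarrow> 'a \<Rightarrow> bool" where
  "atom le a \<longleftrightarrow> a \<noteq> 0 \<and> {x. le x a} = {0, a}"

definition weight :: "('a::zero \<Rightarrow> 'a \<Rightarrow> bool) \<Rightarrow> nat" where
  "weight le = card {a. atom le a}"

text \<open>Linear independence over Z/2Z: no nonempty finite subset sums to 0.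
  The dimension over Z/2Z is the maximal size of an independent set.\<close>
definition z2_independent :: "'a::comm_monoid_add set \<Rightarrow> bool" where
  "z2_independent S \<longleftrightarrow> (\<forall>T\<subseteq>S. finite T \<and> T \<noteq> {} \<longrightarrow> sum id T \<noteq> 0)"

definition z2_dim :: "'a::{comm_monoid_add,finite} itself \<Rightarrow> nat" where
  "z2_dim _ = Max (card ` {S::'a set. z2_independent S})"

end

theory Submission
  imports Defs
begin

text \<open>The axioms force \<open>x + x = 0\<close>, so \<open>A\<close> is a vector space over \<open>\<int>/2\<int>\<close>.
  A strict chain \<open>a\<^sub>0 < \<dots> < a\<^sub>n\<close> gives \<open>n\<close> independent vectors \<open>a\<^sub>1, \<dots>, a\<^sub>n\<close>:
  in a finite subset of a chain, the sum of all but the top element lies below the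
  second largest one, so it cannot equal the top element. Every element is a sum of
  atoms (a non-atom \<open>a\<close> splits as \<open>b + (a + b)\<close> with both summands strictly below
  \<open>a\<close>), hence \<open>2\<^bsup>dim A\<^esup> = |A| \<le> 2\<^bsup>wt A\<^esup>\<close>. Finally, the atoms form an antichain.\<close>

lemma sum_symmetric_difference:
  fixes A B :: "'a::ab_group_add set"
  assumes exp2: "\<And>x::'a. x + x = 0" and "finite A" "finite B"
  shows "sum id ((A - B) \<union> (B - A)) = sum id A + sum id B"
proof -
  have A: "sum id A = sum id (A - B) + sum id (A \<inter> B)"
    using \<open>finite A\<close> by (metis Diff_Diff_Int Diff_subset add.commute sum.subset_diff)
  have B: "sum id B = sum id (B - A) + sum id (A \<inter> B)"
    using \<open>finite B\<close> by (metis Diff_Diff_Int Diff_subset add.commute inf_commute sum.subset_diff)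
  have "sum id ((A - B) \<union> (B - A)) = sum id (A - B) + sum id (B - A)"
    by (rule sum.union_disjoint) (use assms in auto)
  also have "\<dots> = sum id (A - B) + sum id (B - A) + (sum id (A \<inter> B) + sum id (A \<inter> B))"
    using exp2 by simp
  also have "\<dots> = sum id A + sum id B"
    unfolding A B by (simp add: algebra_simps)
  finally show ?thesis .
qed

lemma inj_on_sum_Pow_if_z2_independent:
  fixes S :: "'a::ab_group_add set"
  assumes exp2: "\<And>x::'a. x + x = 0" and "finite S" and "z2_independent S"
  shows "inj_on (sum id) (Pow S)"
proof (rule inj_onI)
  fix T U assume T: "T \<in> Pow S" and U: "U \<in> Pow S" and eq: "sum id T = sum id U"
  have fin: "finite T" "finite U"
    using T U \<open>finite S\<close> by (auto intro: finite_subset)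
  have "sum id ((T - U) \<union> (U - T)) = 0"
    using sum_symmetric_difference[OF exp2 fin] eq exp2 by simp
  moreover have "(T - U) \<union> (U - T) \<subseteq> S" "finite ((T - U) \<union> (U - T))"
    using T U fin by auto
  ultimately have "(T - U) \<union> (U - T) = {}"
    using \<open>z2_independent S\<close> unfolding z2_independent_def by blast
  then show "T = U" by blast
qed

lemma z2_independent_card_le_spanning:
  fixes S M :: "'a::{ab_group_add,finite} set"
  assumes exp2: "\<And>x::'a. x + x = 0" and "z2_independent S"
    and spanning: "\<And>x. x \<in> sum id ` Pow M"
  shows "card S \<le> card M"
proof -
  have "inj_on (sum id) (Pow S)"
    using inj_on_sum_Pow_if_z2_independent[OF exp2 _ \<open>z2_independent S\<close>] by simp
  then have "(2::nat) ^ card S = card (sum id ` Pow S)"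
    by (simp only: card_image card_Pow finite)
  also have "\<dots> \<le> card (sum id ` Pow M)"
    using spanning by (intro card_mono) auto
  also have "\<dots> \<le> 2 ^ card M"
    using card_image_le[of "Pow M" "sum id"] by (simp add: card_Pow)
  finally show ?thesis by simp
qed

lemma card_le_z2_dim:
  fixes S :: "'a::{comm_monoid_add,finite} set"
  assumes "z2_independent S"
  shows "card S \<le> z2_dim TYPE('a)"
  unfolding z2_dim_def using assms by (intro Max_ge) auto

lemma z2_dim_le:
  assumes "\<And>S::'a::{comm_monoid_add,finite} set. z2_independent S \<Longrightarrow> card S \<le> n"
  shows "z2_dim TYPE('a) \<le> n"
proof -
  have "z2_independent ({} :: 'a set)"
    unfolding z2_independent_def by simp
  then show ?thesis
    unfolding z2_dim_def using assms by (intro Max.boundedI) auto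
qed

lemma height_le:
  fixes le :: "'a \<Rightarrow> 'a \<Rightarrow> bool"
  assumes "\<And>n f. \<forall>i<n. strict le (f i) (f (Suc i)) \<Longrightarrow> n \<le> N"
  shows "height le \<le> N"
proof -
  let ?lengths = "{n. \<exists>f::nat \<Rightarrow> 'a. \<forall>i<n. strict le (f i) (f (Suc i))}"
  have "finite ?lengths"
    using assms by (auto simp: finite_nat_set_iff_bounded_le)
  moreover have "0 \<in> ?lengths" by simp
  ultimately show ?thesis
    unfolding height_def using assms by (subst Max_le_iff) auto
qed

lemma weight_le_width:
  fixes le :: "'a::{zero,finite} \<Rightarrow> 'a \<Rightarrow> bool"
  shows "weight le \<le> width le"
proof -
  have "antichain_in le {a. atom le a}"
    unfolding antichain_in_def atom_def by blast
  then show ?thesis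
    unfolding weight_def width_def by (intro Max_ge) auto
qed

locale add_poset =
  fixes le :: "'a::ab_group_add \<Rightarrow> 'a \<Rightarrow> bool"
  assumes additive_poset: "additive_poset le"
begin

lemma poset_refl: "le a a"
  using additive_poset unfolding additive_poset_def by blast

lemma poset_antisym: "le a b \<Longrightarrow> le b a \<Longrightarrow> a = b"
  using additive_poset unfolding additive_poset_def by blast

lemma poset_trans: "le a b \<Longrightarrow> le b c \<Longrightarrow> le a c"
  using additive_poset unfolding additive_poset_def by blast

lemma add_le_bound: "le b a \<Longrightarrow> le c a \<Longrightarrow> le (b + c) a"
  using additive_poset unfolding additive_poset_def by blast

lemma le_add_add: "le a b \<Longrightarrow> le a c \<Longrightarrow> le a (a + b + c)"
  using additive_poset unfolding additive_poset_def by blast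

lemma add_self_eq_zero: "x + x = (0::'a)"
proof -
  have "le (x + x) x"
    by (intro add_le_bound poset_refl)
  then have "le (x + (x + x)) x"
    by (intro add_le_bound poset_refl)
  moreover have "le x (x + x + x)"
    by (intro le_add_add poset_refl)
  ultimately show ?thesis
    using poset_antisym[of "x + (x + x)" x] by (simp add: add.assoc)
qed

lemma zero_le: "le 0 a"
  using add_le_bound[OF poset_refl poset_refl, of a] by (simp add: add_self_eq_zero)

lemma sum_le_bound: "finite T \<Longrightarrow> \<forall>x\<in>T. le x a \<Longrightarrow> le (sum id T) a"
  by (induction T rule: finite_induct) (auto simp: zero_le intro: add_le_bound)

lemma strict_trans: "strict le a b \<Longrightarrow> strict le b c \<Longrightarrow> strict le a c"
  unfolding strict_def using poset_trans poset_antisym by blast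

lemma chain_strict_mono:
  assumes chain: "\<forall>i<n. strict le (f i) (f (Suc i))" and "i < j" "j \<le> n"
  shows "strict le (f i) (f j)"
  using \<open>i < j\<close> \<open>j \<le> n\<close>
proof (induction j)
  case 0
  then show ?case by simp
next
  case (Suc j)
  have step: "strict le (f j) (f (Suc j))"
    using chain Suc.prems by simp
  show ?case
  proof (cases "i = j")
    case True
    then show ?thesis using step by simp
  next
    case False
    then show ?thesis using Suc step strict_trans by simp
  qed
qed

lemma z2_independent_chain:
  assumes total: "\<And>x y. x \<in> C \<Longrightarrow> y \<in> C \<Longrightarrow> le x y \<or> le y x" and "0 \<notin> C"
  shows "z2_independent C"
  unfolding z2_independent_def
proof (intro allI impI notI)
  fix T assume T: "T \<subseteq> C" "finite T \<and> T \<noteq> {}" and sum_zero: "sum id T = 0"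
  have greatest: "\<exists>g\<in>U. \<forall>x\<in>U. x \<noteq> g \<longrightarrow> le x g" if "U \<subseteq> T" "U \<noteq> {}" for U
  proof (rule Finite_Set.bex_greatest_element)
    show "finite U" using that T finite_subset by blast
    show "transp_on U le" by (auto intro: transp_onI poset_trans)
    show "totalp_on U le" using that T total unfolding totalp_on_def by blast
  qed (use that in simp)
  then obtain g where g: "g \<in> T" "\<forall>x\<in>T. x \<noteq> g \<longrightarrow> le x g"
    using T by blast
  have "g + sum id (T - {g}) = 0"
    using sum_zero T g by (simp add: sum.remove)
  then have g_eq: "g = sum id (T - {g})"
    by (metis add_self_eq_zero add_right_cancel)
  show False
  proof (cases "T - {g} = {}")
    case True
    then have "T = {g}" using g by blast
    then show False using g_eq T \<open>0 \<notin> C\<close> by auto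
  next
    case False
    then obtain g' where g': "g' \<in> T - {g}" "\<forall>x\<in>T - {g}. x \<noteq> g' \<longrightarrow> le x g'"
      using greatest[of "T - {g}"] by blast
    have "\<forall>x\<in>T - {g}. le x g'"
      using g' poset_refl by metis
    then have "le g g'"
      using sum_le_bound[of "T - {g}" g'] g_eq T by simp
    moreover have "le g' g" "g' \<noteq> g"
      using g g' by auto
    ultimately show False using poset_antisym by blast
  qed
qed

end

locale finite_add_poset = add_poset le for le :: "'a::{ab_group_add,finite} \<Rightarrow> 'a \<Rightarrow> bool"
begin

lemma chain_length_le_z2_dim:
  assumes chain: "\<forall>i<n. strict le (f i) (f (Suc i))"
  shows "n \<le> z2_dim TYPE('a)"
proof -
  have lt: "strict le (f i) (f j)" if "i < j" "j \<le> n" for i j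
    using chain_strict_mono[OF chain that] .
  have "inj_on f {1..n}"
  proof (rule inj_onI)
    fix i j assume "i \<in> {1..n}" "j \<in> {1..n}" "f i = f j"
    then show "i = j"
      using lt[of i j] lt[of j i] unfolding strict_def by (cases i j rule: linorder_cases) auto
  qed
  then have "card (f ` {1..n}) = n"
    by (simp add: card_image)
  moreover have "z2_independent (f ` {1..n})"
  proof (rule z2_independent_chain)
    show "le x y \<or> le y x" if xy: "x \<in> f ` {1..n}" "y \<in> f ` {1..n}" for x y
    proof -
      obtain i j where "x = f i" "y = f j" "i \<le> n" "j \<le> n"
        using xy by auto
      then show ?thesis
        using lt[of i j] lt[of j i] poset_refl unfolding strict_def
        by (cases i j rule: linorder_cases) auto
    qed
    have "f i \<noteq> 0" if "1 \<le> i" "i \<le> n" for i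
      using lt[of 0 i] that zero_le[of "f 0"] poset_antisym unfolding strict_def by auto
    then show "0 \<notin> f ` {1..n}" by auto
  qed
  ultimately show ?thesis
    using card_le_z2_dim by metis
qed

lemma height_le_z2_dim: "height le \<le> z2_dim TYPE('a)"
  using chain_length_le_z2_dim by (rule height_le)

lemma atoms_span: "a \<in> sum id ` Pow {a. atom le a}"
proof (induction a rule: measure_induct_rule[of "\<lambda>a. card {x. le x a}"])
  case (less a)
  have "{0, a} \<subseteq> {x. le x a}"
    using zero_le poset_refl by simp
  then consider "a = 0" | "atom le a" | b where "le b a" "b \<noteq> 0" "b \<noteq> a"
    unfolding atom_def by auto
  then show ?case
  proof cases
    case 1
    then show ?thesis by (auto intro: image_eqI[of _ _ "{}"])
  next
    case 2
    then show ?thesis by (auto intro: image_eqI[of _ _ "{a}"])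
  next
    case 3
    have spanned: "d \<in> sum id ` Pow {a. atom le a}" if "le d a" "d \<noteq> a" for d
    proof (rule less)
      have "{x. le x d} \<subset> {x. le x a}"
        using that poset_trans poset_antisym poset_refl by blast
      then show "card {x. le x d} < card {x. le x a}"
        by (simp add: psubset_card_mono)
    qed
    obtain T where T: "T \<subseteq> {a. atom le a}" "b = sum id T"
      using spanned[OF 3(1,3)] by blast
    have "le (a + b) a" "a + b \<noteq> a"
      using 3 add_le_bound[OF poset_refl] by auto
    then obtain U where U: "U \<subseteq> {a. atom le a}" "a + b = sum id U"
      using spanned by blast
    have "a = b + (a + b)"
      using add_self_eq_zero[of b] by (simp add: algebra_simps)
    also have "\<dots> = sum id ((T - U) \<union> (U - T))"
      using sum_symmetric_difference[OF add_self_eq_zero, of T U] T U by simp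
    finally show ?thesis
      using T U by blast
  qed
qed

lemma z2_dim_le_weight: "z2_dim TYPE('a) \<le> weight le"
  unfolding weight_def
  by (intro z2_dim_le z2_independent_card_le_spanning[OF add_self_eq_zero] atoms_span)

end

theorem theorem7p1:
  fixes le :: "'a::{ab_group_add,finite} \<Rightarrow> 'a \<Rightarrow> bool"
  assumes "additive_poset le"
  shows "height le \<le> z2_dim TYPE('a) \<and> z2_dim TYPE('a) \<le> weight le \<and> weight le \<le> width le"
proof -
  interpret finite_add_poset le
    using assms by unfold_locales
  show ?thesis
    using height_le_z2_dim z2_dim_le_weight weight_le_width by blast
qed

end
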